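(* For every integer $t\geq 2$ there exist a connected graph $G$ and a function $g:A\to B$ such that $fix(F_G)-fix(G)=t$.
   Context: A set $S\subseteq V(H)$ is a fixing set of a graph $H$ if the only automorphism of $H$ fixing every vertex of $S$ is the identity; $fix(H)$ is the minimum cardinality of a fixing set of $H$. Functigraph: let $G_1,G_2$ be disjoint copies of a connected graph $G$, with $A=V(G_1)$, $B=V(G_2)$, and let $g:A\to B$ be a function. The functigraph $F_G$ has vertex set $A\cup B$ and edge set $E(G_1)\cup E(G_2)\cup\{ug(u):u\in A\}$. *)

theory Defs
  imports Main
begin

definition simple_graph :: "'a set \<Rightarrow> ('a \<Rightarrow> 'a \<Rightarrow> bool) \<Rightarrow> bool" where
  "simple_graph V E \<longleftrightarrow> finite V \<and> (\<forall>u v. E u v \<longrightarrow> u \<in> V \<and> v \<in> V)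
     \<and> (\<forall>u v. E u v \<longrightarrow> E v u) \<and> (\<forall>u. \<not> E u u)"

definition connected_graph :: "'a set \<Rightarrow> ('a \<Rightarrow> 'a \<Rightarrow> bool) \<Rightarrow> bool" where
  "connected_graph V E \<longleftrightarrow> simple_graph V E \<and> V \<noteq> {} \<and> (\<forall>u\<in>V. \<forall>v\<in>V. E\<^sup>*\<^sup>* u v)"

definition automorphism :: "'a set \<Rightarrow> ('a \<Rightarrow> 'a \<Rightarrow> bool) \<Rightarrow> ('a \<Rightarrow> 'a) \<Rightarrow> bool" where
  "automorphism V E f \<longleftrightarrow> bij_betw f V V \<and> (\<forall>u\<in>V. \<forall>v\<in>V. E u v \<longleftrightarrow> E (f u) (f v))"

definition fixing_set :: "'a set \<Rightarrow> ('a \<Rightarrow> 'a \<Rightarrow> bool) \<Rightarrow> 'a set \<Rightarrow> bool" where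
  "fixing_set V E S \<longleftrightarrow> S \<subseteq> V \<and>
     (\<forall>f. automorphism V E f \<and> (\<forall>s\<in>S. f s = s) \<longrightarrow> (\<forall>v\<in>V. f v = v))"

definition fix_number :: "'a set \<Rightarrow> ('a \<Rightarrow> 'a \<Rightarrow> bool) \<Rightarrow> nat" where
  "fix_number V E = (LEAST n. \<exists>S. fixing_set V E S \<and> card S = n)"

text \<open>Functigraph: G1 = Inl-copy (A), G2 = Inr-copy (B); g : A \<rightarrow> B is given as a
  map g :: 'a \<Rightarrow> 'a on V, the vertex u of A being joined to the copy of g u in B.\<close>
definition functigraph_V :: "'a set \<Rightarrow> ('a + 'a) set" where
  "functigraph_V V = Inl ` V \<union> Inr ` V"

definition functigraph_E :: "'a set \<Rightarrow> ('a \<Rightarrow> 'a \<Rightarrow> bool) \<Rightarrow> ('a \<Rightarrow> 'a)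
    \<Rightarrow> ('a + 'a) \<Rightarrow> ('a + 'a) \<Rightarrow> bool" where
  "functigraph_E V E g x y \<longleftrightarrow>
     (\<exists>u v. x = Inl u \<and> y = Inl v \<and> E u v) \<or>
     (\<exists>u v. x = Inr u \<and> y = Inr v \<and> E u v) \<or>
     (\<exists>u\<in>V. x = Inl u \<and> y = Inr (g u)) \<or>
     (\<exists>u\<in>V. x = Inr (g u) \<and> y = Inl u)"

end

theory Submission
  imports Defs "HOL-Combinatorics.Transposition"
begin

text \<open>Take G = K(1,n) and let g send every vertex of the first copy to the centre of the
  second. Two vertices with the same neighbourhood (twins) are swapped by an automorphism, so a
  fixing set contains all but one vertex of every class of twins. The leaves of the star form
  such a class, and in the functigraph the leaves of either copy do (those of the first copy
  are all joined to the same vertex of the second); hence fix(G) \<ge> n - 1 and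
  fix(F_G) \<ge> 2(n - 1). Conversely, an automorphism that fixes a vertex and all but one of its
  neighbours fixes that last neighbour too, so fixing all but one leaf of each copy propagates
  to every vertex.\<close>

definition twins :: "('a \<Rightarrow> 'a \<Rightarrow> bool) \<Rightarrow> 'a \<Rightarrow> 'a \<Rightarrow> bool" where
  "twins E a b \<longleftrightarrow> (\<forall>w. E a w = E b w) \<and> (\<forall>w. E w a = E w b)"

lemma automorphism_transpose_twins:
  assumes "a \<in> V" "b \<in> V" "twins E a b"
  shows "automorphism V E (transpose a b)"
proof -
  have row: "E a w = E b w" and col: "E w a = E w b" for w
    using assms(3) unfolding twins_def by blast+
  have "E (transpose a b u) w = E u w" "E w (transpose a b u) = E w u" for u w
    by (metis row col transpose_apply_first transpose_apply_second transpose_apply_other)+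
  then show ?thesis
    using assms(1,2) by (simp add: automorphism_def)
qed

lemma fixing_set_meets_twins:
  assumes "fixing_set V E S" "a \<in> V" "b \<in> V" "a \<noteq> b" "twins E a b"
  shows "a \<in> S \<or> b \<in> S"
proof (rule ccontr)
  assume "\<not> (a \<in> S \<or> b \<in> S)"
  then have "\<forall>s\<in>S. transpose a b s = s" by (auto simp: transpose_def)
  with assms(1) automorphism_transpose_twins[OF assms(2,3,5)]
  have "transpose a b a = a"
    using assms(2) unfolding fixing_set_def by blast
  with assms(4) show False by simp
qed

lemma card_twin_class_le:
  assumes "fixing_set V E S" "finite L" "L \<subseteq> V" "\<forall>a\<in>L. \<forall>b\<in>L. twins E a b"
  shows "card L \<le> card (L \<inter> S) + 1"
proof -
  have "card (L - S) \<le> Suc 0"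
    using assms fixing_set_meets_twins[OF assms(1)] by (subst card_le_Suc0_iff_eq) blast+
  moreover have "card L = card (L \<inter> S) + card (L - S)"
    using assms(2) by (simp add: card_Int_Diff)
  ultimately show ?thesis by simp
qed

lemma sum_card_twin_classes_le:
  assumes "fixing_set V E S" "finite V" "finite \<L>" "pairwise disjnt \<L>"
    "\<forall>L\<in>\<L>. L \<subseteq> V \<and> (\<forall>a\<in>L. \<forall>b\<in>L. twins E a b)"
  shows "(\<Sum>L\<in>\<L>. card L) \<le> card S + card \<L>"
proof -
  have fin: "finite L" if "L \<in> \<L>" for L
    by (rule finite_subset[OF _ assms(2)]) (use that assms(5) in blast)
  have "finite S"
    by (rule finite_subset[OF _ assms(2)]) (use assms(1) in \<open>simp add: fixing_set_def\<close>)
  have "(\<Sum>L\<in>\<L>. card L) \<le> (\<Sum>L\<in>\<L>. card (L \<inter> S) + 1)"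
  proof (rule sum_mono)
    fix L assume "L \<in> \<L>"
    with assms(5) fin show "card L \<le> card (L \<inter> S) + 1"
      by (intro card_twin_class_le[OF assms(1)]) auto
  qed
  also have "\<dots> = (\<Sum>L\<in>\<L>. card (L \<inter> S)) + card \<L>"
    by (subst sum.distrib) simp
  also have "(\<Sum>L\<in>\<L>. card (L \<inter> S)) = card (\<Union>L\<in>\<L>. L \<inter> S)"
  proof (rule card_UN_disjoint[symmetric])
    show "\<forall>L\<in>\<L>. \<forall>L'\<in>\<L>. L \<noteq> L' \<longrightarrow> L \<inter> S \<inter> (L' \<inter> S) = {}"
      using assms(4) unfolding pairwise_def disjnt_def by blast
  qed (use assms(3) fin in auto)
  also have "card (\<Union>L\<in>\<L>. L \<inter> S) \<le> card S"
    using \<open>finite S\<close> by (intro card_mono) auto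
  finally show ?thesis by simp
qed

lemma automorphism_fixes_only_unfixed_neighbour:
  assumes "automorphism V E f" "y \<in> V" "f y = y" "x \<in> V" "E y x"
    "\<forall>z\<in>V. E y z \<longrightarrow> z = x \<or> f z = z"
  shows "f x = x"
proof -
  have "f x \<in> V" "inj_on f V"
    using assms(1,4) by (auto simp: automorphism_def bij_betw_def)
  moreover have "E y (f x)"
    using assms(1-5) by (metis automorphism_def)
  ultimately show ?thesis
    using assms(4,6) by (metis inj_on_def)
qed

lemma fix_number_eqI:
  assumes "fixing_set V E S" "card S = k" "\<And>S. fixing_set V E S \<Longrightarrow> k \<le> card S"
  shows "fix_number V E = k"
  unfolding fix_number_def by (rule Least_equality) (use assms in auto)

lemma nat_0_1_or_ge_2: "u = 0 \<or> u = 1 \<or> 2 \<le> (u :: nat)"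
  by auto

definition star_V :: "nat \<Rightarrow> nat set" where
  "star_V n = {0..n}"

definition star_E :: "nat \<Rightarrow> nat \<Rightarrow> nat \<Rightarrow> bool" where
  "star_E n u v \<longleftrightarrow> (u = 0 \<and> v \<in> {1..n}) \<or> (v = 0 \<and> u \<in> {1..n})"

lemma connected_star:
  assumes "n \<ge> 1"
  shows "connected_graph (star_V n) (star_E n)"
proof -
  have spoke: "star_E n u 0" "star_E n 0 u" if "u \<in> star_V n" "u \<noteq> 0" for u
    using that by (auto simp: star_V_def star_E_def)
  have to_centre: "(star_E n)\<^sup>*\<^sup>* u 0" and from_centre: "(star_E n)\<^sup>*\<^sup>* 0 u"
    if "u \<in> star_V n" for u
    using that spoke[of u] by (metis r_into_rtranclp rtranclp.rtrancl_refl)+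
  have "(star_E n)\<^sup>*\<^sup>* u v" if "u \<in> star_V n" "v \<in> star_V n" for u v
    using rtranclp_trans[OF to_centre[OF that(1)] from_centre[OF that(2)]] .
  moreover have "simple_graph (star_V n) (star_E n)"
    by (auto simp: simple_graph_def star_V_def star_E_def)
  ultimately show ?thesis
    by (auto simp: connected_graph_def star_V_def)
qed

lemma twins_star_leaves: "a \<in> {1..n} \<Longrightarrow> b \<in> {1..n} \<Longrightarrow> twins (star_E n) a b"
  by (auto simp: twins_def star_E_def)

lemma fix_number_star:
  assumes "n \<ge> 2"
  shows "fix_number (star_V n) (star_E n) = n - 1"
proof (rule fix_number_eqI)
  show "fixing_set (star_V n) (star_E n) {2..n}"
    unfolding fixing_set_def
  proof (intro conjI allI impI)
    fix f assume "automorphism (star_V n) (star_E n) f \<and> (\<forall>s\<in>{2..n}. f s = s)"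
    then have aut: "automorphism (star_V n) (star_E n) f" and leaves: "\<forall>s\<in>{2..n}. f s = s"
      by auto
    have centre: "f 0 = 0"
      by (rule automorphism_fixes_only_unfixed_neighbour[OF aut, of 2])
        (use assms leaves in \<open>auto simp: star_V_def star_E_def\<close>)
    have "f 1 = 1"
      by (rule automorphism_fixes_only_unfixed_neighbour[OF aut, of 0])
        (use assms leaves centre in \<open>auto simp: star_V_def star_E_def\<close>)
    then have "f v = v" if "v \<in> star_V n" for v
      using nat_0_1_or_ge_2[of v] that centre leaves by (auto simp: star_V_def)
    then show "\<forall>v\<in>star_V n. f v = v" ..
  qed (auto simp: star_V_def)
next
  fix S assume "fixing_set (star_V n) (star_E n) S"
  from sum_card_twin_classes_le[OF this, of "{{1..n}}"]
  show "n - 1 \<le> card S"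
    by (simp add: star_V_def twins_star_leaves)
qed simp

abbreviation star_fg_V :: "nat \<Rightarrow> (nat + nat) set" where
  "star_fg_V n \<equiv> functigraph_V (star_V n)"

abbreviation star_fg_E :: "nat \<Rightarrow> nat + nat \<Rightarrow> nat + nat \<Rightarrow> bool" where
  "star_fg_E n \<equiv> functigraph_E (star_V n) (star_E n) (\<lambda>_. 0)"

lemma mem_star_fg_V [simp]:
  "Inl u \<in> star_fg_V n \<longleftrightarrow> u \<le> n"
  "Inr u \<in> star_fg_V n \<longleftrightarrow> u \<le> n"
  by (auto simp: functigraph_V_def star_V_def)

lemma ball_star_fg_V [simp]:
  "(\<forall>z\<in>star_fg_V n. P z) \<longleftrightarrow> (\<forall>u\<le>n. P (Inl u) \<and> P (Inr u))"
  by (auto simp: functigraph_V_def star_V_def)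

lemma finite_star_fg_V: "finite (star_fg_V n)"
  by (simp add: functigraph_V_def star_V_def)

lemma star_fg_E_simps [simp]:
  "star_fg_E n (Inl u) (Inl v) \<longleftrightarrow> star_E n u v"
  "star_fg_E n (Inr u) (Inr v) \<longleftrightarrow> star_E n u v"
  "star_fg_E n (Inl u) (Inr v) \<longleftrightarrow> u \<le> n \<and> v = 0"
  "star_fg_E n (Inr v) (Inl u) \<longleftrightarrow> u \<le> n \<and> v = 0"
  by (auto simp: functigraph_E_def star_V_def)

lemma fix_number_star_fg:
  assumes "n \<ge> 2"
  shows "fix_number (star_fg_V n) (star_fg_E n) = 2 * (n - 1)"
proof (rule fix_number_eqI)
  show "fixing_set (star_fg_V n) (star_fg_E n) (Inl ` {2..n} \<union> Inr ` {2..n})"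
    unfolding fixing_set_def
  proof (intro conjI allI impI)
    fix f assume "automorphism (star_fg_V n) (star_fg_E n) f \<and>
      (\<forall>s\<in>Inl ` {2..n} \<union> Inr ` {2..n}. f s = s)"
    then have aut: "automorphism (star_fg_V n) (star_fg_E n) f"
      and leaves_Inl: "\<And>u. 2 \<le> u \<Longrightarrow> u \<le> n \<Longrightarrow> f (Inl u) = Inl u"
      and leaves_Inr: "\<And>u. 2 \<le> u \<Longrightarrow> u \<le> n \<Longrightarrow> f (Inr u) = Inr u"
      by auto
    note fixes_neighbour = automorphism_fixes_only_unfixed_neighbour[OF aut]
    have r0: "f (Inr 0) = Inr 0"
      by (rule fixes_neighbour[of "Inr 2"]) (simp_all add: assms leaves_Inr star_E_def)
    have l0: "f (Inl 0) = Inl 0"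
      by (rule fixes_neighbour[of "Inl 2"]) (simp_all add: assms leaves_Inl r0 star_E_def)
    have Inl_fixed_but_1: "\<forall>u\<le>n. u = 1 \<or> f (Inl u) = Inl u"
      using nat_0_1_or_ge_2 l0 leaves_Inl by metis
    have l1: "f (Inl 1) = Inl 1"
      by (rule fixes_neighbour[of "Inl 0"])
        (use assms Inl_fixed_but_1 in \<open>auto simp: r0 l0 star_E_def\<close>)
    have fixed_Inl: "f (Inl u) = Inl u" if "u \<le> n" for u
      using nat_0_1_or_ge_2[of u] that l0 l1 leaves_Inl by auto
    have Inr_fixed_but_1: "\<forall>u\<le>n. u = 1 \<or> f (Inr u) = Inr u"
      using nat_0_1_or_ge_2 r0 leaves_Inr by metis
    have r1: "f (Inr 1) = Inr 1"
      by (rule fixes_neighbour[of "Inr 0"])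
        (use assms Inr_fixed_but_1 in \<open>auto simp: r0 fixed_Inl star_E_def\<close>)
    have fixed_Inr: "f (Inr u) = Inr u" if "u \<le> n" for u
      using nat_0_1_or_ge_2[of u] that r0 r1 leaves_Inr by auto
    show "\<forall>v\<in>star_fg_V n. f v = v"
      by (simp add: fixed_Inl fixed_Inr)
  qed auto
next
  show "card (Inl ` {2..n} \<union> Inr ` {2..n}) = 2 * (n - 1)"
    by (subst card_Un_disjoint) (auto simp: card_image)
next
  fix S assume S: "fixing_set (star_fg_V n) (star_fg_E n) S"
  have twin_leaves: "twins (star_fg_E n) (Inl a) (Inl b)" "twins (star_fg_E n) (Inr a) (Inr b)"
    if "a \<in> {1..n}" "b \<in> {1..n}" for a b
    using that by (auto simp: twins_def split_sum_all star_E_def)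
  have copies_disjoint: "Inl ` A \<inter> Inr ` B = {}" "Inr ` B \<inter> Inl ` A = {}" for A B :: "nat set"
    by blast+
  have "(\<Sum>L\<in>{Inl ` {1..n}, Inr ` {1..n}}. card L) \<le> card S + card {Inl ` {1..n}, Inr ` {1..n}}"
    by (rule sum_card_twin_classes_le[OF S])
      (simp_all add: pairwise_def disjnt_def image_subset_iff twin_leaves finite_star_fg_V
        copies_disjoint)
  moreover have "Inl 1 \<in> Inl ` {1..n} - Inr ` {1..n}"
    using assms by auto
  then have "Inl ` {1..n} \<noteq> Inr ` {1..n}"
    by blast
  ultimately show "2 * (n - 1) \<le> card S"
    by (simp add: card_image)
qed

theorem lemma2p10:
  fixes t :: nat
  assumes "t \<ge> 2"
  shows "\<exists>(V :: nat set) E g. connected_graph V E \<and> g ` V \<subseteq> V \<and>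
     int (fix_number (functigraph_V V) (functigraph_E V E g)) - int (fix_number V E) = int t"
proof (intro exI conjI)
  show "connected_graph (star_V (t + 1)) (star_E (t + 1))"
    by (rule connected_star) simp
  show "(\<lambda>_. 0) ` star_V (t + 1) \<subseteq> star_V (t + 1)"
    by (auto simp: star_V_def)
  show "int (fix_number (star_fg_V (t + 1)) (star_fg_E (t + 1)))
      - int (fix_number (star_V (t + 1)) (star_E (t + 1))) = int t"
    using fix_number_star_fg[of "t + 1"] fix_number_star[of "t + 1"] assms by simp
qed

end
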